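(* For each integer $n\ge4$ there exists $\phi\in\mathbb{R}$ such that $$\left|\frac{\sin n\phi}{n\sin\phi}\right|-\left|\frac{\sin (n+1)\phi}{(n+1)\sin\phi}\right|>\frac1n;$$ more precisely, with $\theta_n=\pi/(n+1)$ and $\Psi_n(\phi)$ denoting the left-hand side, $\Psi_n(\theta_n)=1/n$ and $\Psi_n(\theta_n-\delta)>1/n$ for all sufficiently small $\delta>0$.
   Context: The quantity $\Psi_n(\phi)$ equals $|a_n(L_\phi)|-|a_{n+1}(L_\phi)|$ where $L_\phi(z)=\sum_{n\ge1}\frac{\sin n\phi}{n\sin\phi}z^n$. *)

theory Defs
  imports "HOL-Analysis.Analysis"
begin

definition Psi :: "nat \<Rightarrow> real \<Rightarrow> real" where
  "Psi n \<phi> = \<bar>sin (real n * \<phi>) / (real n * sin \<phi>)\<bar>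
             - \<bar>sin (real (n + 1) * \<phi>) / (real (n + 1) * sin \<phi>)\<bar>"

end

theory Submission
  imports Defs
begin

text \<open>Put \<open>\<theta> = \<pi>/(n+1)\<close>. Then \<open>sin n\<theta> = sin \<theta>\<close> and \<open>sin (n+1)\<theta> = 0\<close>, so
  \<open>\<Psi>\<^sub>n(\<theta>) = 1/n\<close>. For \<open>0 < h < \<theta>\<close> all sines in \<open>\<Psi>\<^sub>n(\<theta> - h)\<close> are positive, and
  \<open>\<Psi>\<^sub>n(\<theta> - h) - 1/n\<close> is a positive multiple of a smooth function of \<open>h\<close> that vanishes
  at \<open>0\<close> with derivative \<open>(n+1)((n+1) cos \<theta> - n)\<close> there. By \<open>cos \<theta> \<ge> 1 - \<theta>\<^sup>2/2\<close>
  this derivative is positive once \<open>\<pi>\<^sup>2 < 2(n+1)\<close>, i.e. for \<open>n \<ge> 4\<close>.\<close>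

lemma cos_ge_one_minus_sq_half: "1 - x\<^sup>2 / 2 \<le> cos (x::real)"
proof -
  have "(sin (x/2))\<^sup>2 \<le> (x/2)\<^sup>2"
    by (metis abs_le_square_iff abs_sin_x_le_abs_x)
  thus ?thesis
    using cos_double_sin[of "x/2"] by (simp add: power_divide)
qed

lemma DERIV_pos_eventually_inc_right:
  assumes "(f has_real_derivative l) (at x)" and "0 < l"
  shows "\<forall>\<^sub>F h in at_right 0. f x < f (x + h)"
proof -
  obtain d where "d > 0" and "\<And>h. 0 < h \<Longrightarrow> h < d \<Longrightarrow> f x < f (x + h)"
    using DERIV_pos_inc_right[OF assms] by blast
  thus ?thesis
    unfolding eventually_at_right_field by (intro exI[of _ d]) auto
qed

definition theta :: "nat \<Rightarrow> real" where
  "theta n = pi / real (n + 1)"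

lemma theta_pos: "0 < theta n"
  by (simp add: theta_def)

lemma theta_less_pi: "0 < n \<Longrightarrow> theta n < pi"
  by (simp add: theta_def field_simps)

lemma Suc_mult_theta: "real (n + 1) * theta n = pi"
  by (simp add: theta_def)

lemma mult_theta: "real n * theta n = pi - theta n"
  using Suc_mult_theta[of n] by (simp add: algebra_simps)

lemma sin_mult_theta: "sin (real n * theta n) = sin (theta n)"
  by (simp add: mult_theta)

lemma cos_mult_theta: "cos (real n * theta n) = - cos (theta n)"
  by (simp add: mult_theta)

lemma Psi_theta:
  assumes "0 < n"
  shows "Psi n (theta n) = 1 / real n"
proof -
  have "0 < sin (theta n)"
    using theta_pos theta_less_pi[OF assms] by (rule sin_gt_zero)
  thus ?thesis
    unfolding Psi_def sin_mult_theta Suc_mult_theta using assms by simp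
qed

definition gap_numerator :: "nat \<Rightarrow> real \<Rightarrow> real" where
  "gap_numerator n h = real (n + 1) * sin (real n * (theta n - h))
     - real n * sin (real (n + 1) * h) - real (n + 1) * sin (theta n - h)"

lemma Psi_theta_minus_gap:
  assumes "0 < n" "0 < h" "h < theta n"
  shows "Psi n (theta n - h) - 1 / real n
    = gap_numerator n h / (real n * real (n + 1) * sin (theta n - h))"
proof -
  let ?N = "real n" and ?M = "real (n + 1)"
  have sin_pos: "0 < sin (theta n - h)"
    using assms theta_less_pi[of n] by (intro sin_gt_zero) auto
  have "?N * (theta n - h) \<le> ?N * theta n"
    using assms by simp
  also have "\<dots> < pi"
    using mult_theta[of n] theta_pos[of n] by simp
  finally have "?N * (theta n - h) < pi" .
  hence sin_n_pos: "0 < sin (?N * (theta n - h))"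
    using assms by (intro sin_gt_zero) auto
  have "?M * (theta n - h) = pi - ?M * h"
    using Suc_mult_theta[of n] by (simp add: algebra_simps)
  hence sin_Suc: "sin (?M * (theta n - h)) = sin (?M * h)"
    by simp
  have "?M * h < ?M * theta n"
    using assms by (intro mult_strict_left_mono) auto
  hence "?M * h < pi"
    by (simp only: Suc_mult_theta)
  hence sin_Suc_pos: "0 < sin (?M * h)"
    using assms by (intro sin_gt_zero) auto
  have "Psi n (theta n - h) - 1 / ?N
      = sin (?N * (theta n - h)) / (?N * sin (theta n - h))
        - sin (?M * h) / (?M * sin (theta n - h)) - 1 / ?N"
    unfolding Psi_def sin_Suc using sin_pos sin_n_pos sin_Suc_pos by simp
  also have "\<dots> = (?M * sin (?N * (theta n - h)) - ?N * sin (?M * h) - ?M * sin (theta n - h))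
      / (?N * ?M * sin (theta n - h))"
  proof -
    have "a / (N * c) - b / (M * c) - 1 / N = (M * a - N * b - M * c) / (N * M * c)"
      if "0 < c" "0 < N" "0 < M" for a b c N M :: real
      using that by (simp add: field_simps)
    thus ?thesis
      using sin_pos assms(1) by simp
  qed
  finally show ?thesis
    unfolding gap_numerator_def by simp
qed

lemma gap_numerator_zero: "gap_numerator n 0 = 0"
  by (simp add: gap_numerator_def sin_mult_theta)

lemma gap_numerator_deriv:
  "(gap_numerator n has_real_derivative real (n + 1) * (real (n + 1) * cos (theta n) - real n)) (at 0)"
proof -
  have "(gap_numerator n has_real_derivative
      real (n + 1) * (cos (real n * (theta n - 0)) * (0 - real n))
      - real n * (cos (real (n + 1) * 0) * real (n + 1))
      - real (n + 1) * (cos (theta n - 0) * (0 - 1))) (at 0)"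
    unfolding gap_numerator_def [abs_def] by (intro derivative_eq_intros) auto
  thus ?thesis
    by (simp add: cos_mult_theta algebra_simps)
qed

lemma cos_theta_bound:
  assumes "4 \<le> n"
  shows "real n < real (n + 1) * cos (theta n)"
proof -
  let ?M = "real (n + 1)"
  have "pi\<^sup>2 \<le> 3.15\<^sup>2"
    using pi_approx(2) pi_gt_zero by (intro power_mono) auto
  also have "\<dots> < 2 * ?M"
    using assms by (simp add: power2_eq_square)
  finally have "pi\<^sup>2 < 2 * ?M" .
  hence "pi\<^sup>2 / ?M < 2"
    by (simp add: divide_less_eq)
  moreover have "?M * (theta n)\<^sup>2 = pi\<^sup>2 / ?M"
    by (simp add: theta_def power2_eq_square)
  ultimately have "?M * (theta n)\<^sup>2 < 2"
    by simp
  moreover have "?M * (1 - (theta n)\<^sup>2 / 2) \<le> ?M * cos (theta n)"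
    using cos_ge_one_minus_sq_half by (intro mult_left_mono) auto
  moreover have "?M * (1 - (theta n)\<^sup>2 / 2) = ?M - ?M * (theta n)\<^sup>2 / 2"
    by (simp add: right_diff_distrib)
  moreover have "?M = real n + 1"
    by simp
  ultimately show ?thesis
    by linarith
qed

theorem mainTheorem3:
  fixes n :: nat
  assumes "n \<ge> 4"
  shows "(\<exists>\<phi>::real. Psi n \<phi> > 1 / real n)
    \<and> Psi n (pi / real (n + 1)) = 1 / real n
    \<and> (\<forall>\<^sub>F \<delta> in at_right (0::real). Psi n (pi / real (n + 1) - \<delta>) > 1 / real n)"
proof -
  have n_pos: "0 < n" using assms by simp
  have "0 < real (n + 1) * (real (n + 1) * cos (theta n) - real n)"
    using cos_theta_bound[OF assms] by simp
  hence "\<forall>\<^sub>F h in at_right 0. 0 < gap_numerator n h"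
    using DERIV_pos_eventually_inc_right[OF gap_numerator_deriv] by (simp add: gap_numerator_zero)
  moreover have "\<forall>\<^sub>F h in at_right 0. 0 < h \<and> h < theta n"
    using eventually_at_right_field theta_pos by blast
  ultimately have ev: "\<forall>\<^sub>F h in at_right 0. Psi n (theta n - h) > 1 / real n"
  proof eventually_elim
    case (elim h)
    hence "0 < sin (theta n - h)"
      using theta_less_pi[OF n_pos] by (intro sin_gt_zero) auto
    with elim have "0 < gap_numerator n h / (real n * real (n + 1) * sin (theta n - h))"
      using n_pos by simp
    with elim show ?case
      using Psi_theta_minus_gap[OF n_pos, of h] by linarith
  qed
  show ?thesis
    using ev eventually_happens[OF ev] Psi_theta[OF n_pos]
    unfolding theta_def by (auto simp: trivial_limit_at_right_real)
qed

end
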